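(* Let $\gamma,\sigma:[a,b]\to V$ be continuous bounded variation paths, fix $(s,t)\in[a,b]^2$, and define $f(x):=K^{x\gamma,\sigma}(s,t)$ for $x\in\mathbb{R}$. Then $f$ is infinitely differentiable and for every $k\in\mathbb{N}$, \[ f^{(k)}(x)=\sum_{l=0}^\infty x^l\frac{(l+k)!}{l!}\left\langle S(\gamma)^{l+k}_{a,s},S(\sigma)^{l+k}_{a,t}\right\rangle_{l+k}. \] In particular, for $x\neq0$, \[ |f^{(k)}(x)|\le\frac{L_s(\gamma)^{k/2}L_t(\sigma)^{k/2}}{|x|^{k/2}}\,I_k\left(2\sqrt{|x|L_s(\gamma)L_t(\sigma)}\right), \] where $I_k$ is the modified Bessel function of the first kind of order $k$.
   Context: $V$ is a finite-dimensional real inner product space, $\langle\cdot,\cdot\rangle_k$ the induced Hilbert–Schmidt inner product on $V^{\otimes k}$. Signature: $S(\gamma)^0=1$, $S(\gamma)^k_{s,t}=\int_{s<u_1<\dots<u_k<t}d\gamma_{u_1}\otimes\cdots\otimes d\gamma_{u_k}$. $K^{x\gamma,\sigma}(s,t)=\sum_{k\ge0}x^k\langle S(\gamma)^k_{a,s},S(\sigma)^k_{a,t}\rangle_k$. $L_s(\gamma)$ is the length of $\gamma|_{[a,s]}$. *)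

theory Defs
  imports "HOL-Analysis.Analysis"
begin

definition is_partition :: "real \<Rightarrow> real \<Rightarrow> nat \<Rightarrow> (nat \<Rightarrow> real) \<Rightarrow> bool" where
  "is_partition a b n p \<longleftrightarrow> p 0 = a \<and> p n = b \<and> (\<forall>i<n. p i < p (Suc i))"

definition variation_sums :: "(real \<Rightarrow> 'v::real_normed_vector) \<Rightarrow> real \<Rightarrow> real \<Rightarrow> real set" where
  "variation_sums \<gamma> a b =
     {(\<Sum>i<n. norm (\<gamma> (p (Suc i)) - \<gamma> (p i))) | n p. is_partition a b n p}"

definition bounded_variation_on :: "(real \<Rightarrow> 'v::real_normed_vector) \<Rightarrow> real \<Rightarrow> real \<Rightarrow> bool" where
  "bounded_variation_on \<gamma> a b \<longleftrightarrow> bdd_above (variation_sums \<gamma> a b)"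

text \<open>Length of the path restricted to [a,s], i.e. L_s(gamma) = path_length gamma a s.\<close>
definition path_length :: "(real \<Rightarrow> 'v::real_normed_vector) \<Rightarrow> real \<Rightarrow> real \<Rightarrow> real" where
  "path_length \<gamma> a s = Sup (variation_sums \<gamma> a s)"

definition has_RS_integral :: "(real \<Rightarrow> real) \<Rightarrow> (real \<Rightarrow> real) \<Rightarrow> real \<Rightarrow> real \<Rightarrow> real \<Rightarrow> bool" where
  "has_RS_integral f g a b I \<longleftrightarrow>
     (\<forall>\<epsilon>>0. \<exists>\<delta>>0. \<forall>n p \<tau>. is_partition a b n p
        \<and> (\<forall>i<n. p i \<le> \<tau> i \<and> \<tau> i \<le> p (Suc i) \<and> p (Suc i) - p i < \<delta>)
        \<longrightarrow> \<bar>(\<Sum>i<n. f (\<tau> i) * (g (p (Suc i)) - g (p i))) - I\<bar> < \<epsilon>)"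

definition RS_integral :: "(real \<Rightarrow> real) \<Rightarrow> (real \<Rightarrow> real) \<Rightarrow> real \<Rightarrow> real \<Rightarrow> real" where
  "RS_integral f g a b = (THE I. has_RS_integral f g a b I)"

text \<open>Coordinates of the signature with respect to the orthonormal basis Basis.
  A word is stored REVERSED: sig_coord gamma a (e # w) t is the coefficient of the
  basis tensor (rev w) \<otimes> e of S(gamma)_{a,t}, defined by the usual recursion
  S^{k+1}_{a,t} = int_a^t S^k_{a,u} \<otimes> d gamma_u.\<close>
fun sig_coord :: "(real \<Rightarrow> 'v::euclidean_space) \<Rightarrow> real \<Rightarrow> 'v list \<Rightarrow> real \<Rightarrow> real" where
  "sig_coord \<gamma> a [] t = 1"
| "sig_coord \<gamma> a (e # w) t = RS_integral (\<lambda>u. sig_coord \<gamma> a w u) (\<lambda>u. \<gamma> u \<bullet> e) a t"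

text \<open>Words of length k over the basis; they index an orthonormal basis of V^{\<otimes>k}.\<close>
definition words :: "nat \<Rightarrow> 'v::euclidean_space list set" where
  "words k = {w. length w = k \<and> set w \<subseteq> Basis}"

definition sig_level :: "(real \<Rightarrow> 'v::euclidean_space) \<Rightarrow> real \<Rightarrow> nat \<Rightarrow> real \<Rightarrow> ('v list \<Rightarrow> real)" where
  "sig_level \<gamma> a k t = (\<lambda>w. if w \<in> words k then sig_coord \<gamma> a w t else 0)"

definition hs_inner :: "nat \<Rightarrow> ('v::euclidean_space list \<Rightarrow> real) \<Rightarrow> ('v list \<Rightarrow> real) \<Rightarrow> real" where
  "hs_inner k A B = (\<Sum>w\<in>words k. A w * B w)"

definition sig_kernel :: "(real \<Rightarrow> 'v::euclidean_space) \<Rightarrow> (real \<Rightarrow> 'v) \<Rightarrow> real \<Rightarrow> real \<Rightarrow> real \<Rightarrow> real" where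
  "sig_kernel \<gamma> \<sigma> a s t = (\<Sum>k. hs_inner k (sig_level \<gamma> a k s) (sig_level \<sigma> a k t))"

definition bessel_I :: "nat \<Rightarrow> real \<Rightarrow> real" where
  "bessel_I k z = (\<Sum>m. (z / 2) ^ (2 * m + k) / (fact m * fact (m + k)))"

end

theory Submission
  imports Defs
begin

text \<open>Rescaling \<open>\<gamma>\<close> by \<open>x\<close> multiplies the level-\<open>k\<close> signature by \<open>x\<^sup>k\<close>, so
  \<open>f x = (\<Sum>k. c\<^sub>k x\<^sup>k)\<close> with \<open>c\<^sub>k = \<langle>S(\<gamma>)\<^sup>k\<^sub>a\<^sub>,\<^sub>s, S(\<sigma>)\<^sup>k\<^sub>a\<^sub>,\<^sub>t\<rangle>\<close>.
  Each signature level is the Riemann--Stieltjes integral of the previous one against \<open>\<gamma>\<close>,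
  whose increments are dominated by those of the path length; by induction the levels decay
  factorially, \<open>\<parallel>S(\<gamma>)\<^sup>k\<^sub>a\<^sub>,\<^sub>u\<parallel> \<le> L\<^sub>u(\<gamma>)\<^sup>k / k!\<close>, and Cauchy--Schwarz gives
  \<open>\<bar>c\<^sub>k\<bar> \<le> (L\<^sub>s(\<gamma>) L\<^sub>t(\<sigma>))\<^sup>k / (k!)\<^sup>2\<close>. Hence \<open>f\<close> is an entire power series that
  can be differentiated termwise, and the termwise bound on the \<open>k\<close>-th derivative sums to
  the Bessel series of \<open>I\<^sub>k\<close>. The integrals exist because sums over two fine partitions
  differ by little from the sum over a common refinement.\<close>

section \<open>Partitions\<close>

lemma is_partition_strict_mono:
  assumes "is_partition p q n P" "i < j" "j \<le> n"
  shows "P i < P j"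
  using assms(2,3)
proof (induction j)
  case 0
  then show ?case by simp
next
  case (Suc j)
  have "P j < P (Suc j)" using assms(1) Suc.prems unfolding is_partition_def by auto
  then show ?case using Suc by (cases "i = j") auto
qed

lemma is_partition_mono:
  assumes "is_partition p q n P" "i \<le> j" "j \<le> n"
  shows "P i \<le> P j"
  using is_partition_strict_mono[OF assms(1), of i j] assms(2,3) by (cases "i = j") auto

lemma is_partition_bounds:
  assumes "is_partition p q n P" "i \<le> n"
  shows "p \<le> P i" "P i \<le> q"
  using is_partition_mono[OF assms(1), of 0 i] is_partition_mono[OF assms(1), of i n] assms
  unfolding is_partition_def by auto

lemma is_partition_degenerate:
  assumes "is_partition p p n P"
  shows "n = 0"
  using is_partition_strict_mono[OF assms, of 0 n] assms unfolding is_partition_def by fastforce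

lemma is_partition_extend:
  assumes "is_partition a p n P" "p < q"
  shows "is_partition a q (Suc n) (P(Suc n := q))"
  using assms unfolding is_partition_def by (auto simp: less_Suc_eq)

lemma is_partition_sorted_list:
  assumes "sorted_wrt (<) L" "set L \<subseteq> {p..q}" "p \<in> set L" "q \<in> set L"
  shows "is_partition p q (length L - 1) (nth L)"
proof -
  define N where "N = length L - 1"
  have length_L: "length L = Suc N" using assms(3) unfolding N_def by (cases L) auto
  have strict: "i < j \<Longrightarrow> j \<le> N \<Longrightarrow> L ! i < L ! j" for i j
    using sorted_wrt_nth_less[OF assms(1)] length_L by simp
  have bounds: "p \<le> L ! j \<and> L ! j \<le> q" if "j \<le> N" for j
  proof -
    have "L ! j \<in> set L" using length_L that by simp
    then show ?thesis using assms(2) by auto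
  qed
  have mono: "L ! i \<le> L ! j" if "i \<le> j" "j \<le> N" for i j
    using strict[of i j] that by (cases "i = j") auto
  obtain i j where i: "i \<le> N" "L ! i = p" and j: "j \<le> N" "L ! j = q"
    using assms(3,4) length_L by (auto simp: in_set_conv_nth less_Suc_eq_le)
  have "L ! 0 = p" using mono[OF le0 i(1)] bounds[of 0] i(2) by linarith
  moreover have "L ! N = q" using mono[OF j(1) order_refl] bounds[of N] j(2) by linarith
  ultimately show ?thesis unfolding is_partition_def N_def[symmetric] using strict by simp
qed

lemma common_refinement:
  assumes P: "is_partition p q n P" and Q: "is_partition p q n' Q"
  obtains N r where "is_partition p q N r" "\<forall>i\<le>n. \<exists>j\<le>N. P i = r j" "\<forall>i\<le>n'. \<exists>j\<le>N. Q i = r j"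
proof -
  define D where "D = P ` {..n} \<union> Q ` {..n'}"
  have "finite D" unfolding D_def by simp
  then obtain L where L: "sorted_wrt (<) L" "set L = D" using finite_set_strict_sorted by blast
  have "set L \<subseteq> {p..q}" "p \<in> set L" "q \<in> set L"
    unfolding L(2) D_def using is_partition_bounds[OF P] is_partition_bounds[OF Q] P
    unfolding is_partition_def by force+
  then have "is_partition p q (length L - 1) (nth L)" by (rule is_partition_sorted_list[OF L(1)])
  moreover have "\<exists>j\<le>length L - 1. x = L ! j" if x: "x \<in> D" for x
  proof -
    obtain j where "j < length L" "x = L ! j" using x L(2) by (auto simp: in_set_conv_nth)
    then show ?thesis by (intro exI[of _ j]) auto
  qed
  ultimately show ?thesis using that unfolding D_def by blast
qed

section \<open>Riemann--Stieltjes integration against controlled integrators\<close>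

definition RS_sum ::
    "(real \<Rightarrow> real) \<Rightarrow> (real \<Rightarrow> real) \<Rightarrow> nat \<Rightarrow> (nat \<Rightarrow> real) \<Rightarrow> (nat \<Rightarrow> real) \<Rightarrow> real" where
  "RS_sum f g n P \<tau> = (\<Sum>i<n. f (\<tau> i) * (g (P (Suc i)) - g (P i)))"

definition fine_tagged_partition ::
    "real \<Rightarrow> real \<Rightarrow> nat \<Rightarrow> (nat \<Rightarrow> real) \<Rightarrow> (nat \<Rightarrow> real) \<Rightarrow> real \<Rightarrow> bool" where
  "fine_tagged_partition p q n P \<tau> \<delta> \<longleftrightarrow>
     is_partition p q n P \<and> (\<forall>i<n. P i \<le> \<tau> i \<and> \<tau> i \<le> P (Suc i) \<and> P (Suc i) - P i < \<delta>)"

definition controlled :: "(real \<Rightarrow> real) \<Rightarrow> (real \<Rightarrow> real) \<Rightarrow> real \<Rightarrow> real \<Rightarrow> bool" where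
  "controlled g W p q \<longleftrightarrow> (\<forall>x y. p \<le> x \<longrightarrow> x \<le> y \<longrightarrow> y \<le> q \<longrightarrow> \<bar>g y - g x\<bar> \<le> W y - W x)"

definition uniform_modulus :: "(real \<Rightarrow> real) \<Rightarrow> real \<Rightarrow> real \<Rightarrow> real \<Rightarrow> real \<Rightarrow> bool" where
  "uniform_modulus f p q \<epsilon> \<delta> \<longleftrightarrow>
     (\<forall>x\<in>{p..q}. \<forall>y\<in>{p..q}. \<bar>x - y\<bar> < \<delta> \<longrightarrow> \<bar>f x - f y\<bar> \<le> \<epsilon>)"

lemma has_RS_integral_iff:
  "has_RS_integral f g p q I \<longleftrightarrow>
     (\<forall>\<epsilon>>0. \<exists>\<delta>>0. \<forall>n P \<tau>. fine_tagged_partition p q n P \<tau> \<delta> \<longrightarrow> \<bar>RS_sum f g n P \<tau> - I\<bar> < \<epsilon>)"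
  unfolding has_RS_integral_def fine_tagged_partition_def RS_sum_def by blast

lemma fine_tagged_partition_mono:
  "fine_tagged_partition p q n P \<tau> \<delta> \<Longrightarrow> \<delta> \<le> \<delta>' \<Longrightarrow> fine_tagged_partition p q n P \<tau> \<delta>'"
  unfolding fine_tagged_partition_def by force

lemma fine_tagged_partition_bounds:
  assumes "fine_tagged_partition p q n P \<tau> \<delta>" "i < n"
  shows "p \<le> P i" "P i \<le> \<tau> i" "\<tau> i \<le> P (Suc i)" "P (Suc i) \<le> q" "P (Suc i) - P i < \<delta>"
  using assms is_partition_bounds[of p q n P i] is_partition_bounds[of p q n P "Suc i"]
  unfolding fine_tagged_partition_def by auto

lemma fine_partition_exists:
  assumes "p \<le> q" "\<delta> > 0"
  obtains n P where "fine_tagged_partition p q n P P \<delta>"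
proof (cases "p = q")
  case True
  then show ?thesis
    using that[of 0 "\<lambda>_. p"] by (simp add: fine_tagged_partition_def is_partition_def)
next
  case False
  then have pq: "p < q" using assms by simp
  obtain n :: nat where n: "(q - p) / \<delta> < n" using reals_Archimedean2 by blast
  then have n_pos: "n > 0" using pq assms(2) by (cases n) (auto simp: field_simps)
  define P where "P i = p + real i * (q - p) / real n" for i
  have mesh: "P (Suc i) - P i = (q - p) / real n" for i
    unfolding P_def by (simp add: diff_divide_distrib[symmetric] algebra_simps)
  have "(q - p) / real n < \<delta>" "(q - p) / real n > 0"
    using n n_pos pq assms(2) by (simp_all add: field_simps)
  then have "P i \<le> P (Suc i) \<and> P (Suc i) - P i < \<delta>" for i using mesh[of i] by simp
  moreover have "is_partition p q n P"
    unfolding is_partition_def P_def using n_pos pq by (auto simp: field_simps)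
  ultimately show ?thesis using that[of n P] unfolding fine_tagged_partition_def by auto
qed

lemma has_RS_integral_unique:
  assumes "has_RS_integral f g p q I" "has_RS_integral f g p q J" "p \<le> q"
  shows "I = J"
proof (rule ccontr)
  assume "I \<noteq> J"
  then have e: "\<bar>I - J\<bar> / 2 > 0" by simp
  obtain d1 where d1: "d1 > 0"
      "\<forall>n P \<tau>. fine_tagged_partition p q n P \<tau> d1 \<longrightarrow> \<bar>RS_sum f g n P \<tau> - I\<bar> < \<bar>I - J\<bar> / 2"
    using assms(1) e unfolding has_RS_integral_iff by blast
  obtain d2 where d2: "d2 > 0"
      "\<forall>n P \<tau>. fine_tagged_partition p q n P \<tau> d2 \<longrightarrow> \<bar>RS_sum f g n P \<tau> - J\<bar> < \<bar>I - J\<bar> / 2"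
    using assms(2) e unfolding has_RS_integral_iff by blast
  obtain n P where P: "fine_tagged_partition p q n P P (min d1 d2)"
    using fine_partition_exists[OF assms(3), of "min d1 d2"] d1 d2 by auto
  have "\<bar>RS_sum f g n P P - I\<bar> < \<bar>I - J\<bar> / 2" "\<bar>RS_sum f g n P P - J\<bar> < \<bar>I - J\<bar> / 2"
    using d1 d2 fine_tagged_partition_mono[OF P] by auto
  moreover have "\<bar>I - J\<bar> \<le> \<bar>RS_sum f g n P P - I\<bar> + \<bar>RS_sum f g n P P - J\<bar>" by arith
  ultimately show False by argo
qed

lemma RS_integral_eqI:
  assumes "has_RS_integral f g p q I" "p \<le> q"
  shows "RS_integral f g p q = I"
  unfolding RS_integral_def using has_RS_integral_unique[OF _ _ assms(2)] assms(1) by blast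

lemma has_RS_integral_mult:
  assumes "has_RS_integral f g p q I"
  shows "has_RS_integral (\<lambda>u. c * f u) (\<lambda>u. d * g u) p q (c * d * I)"
  unfolding has_RS_integral_iff
proof (intro allI impI)
  fix e :: real assume e: "e > 0"
  then have e': "e / (\<bar>c * d\<bar> + 1) > 0" by (simp add: add_pos_nonneg)
  then obtain \<delta> where \<delta>: "\<delta> > 0"
      "\<forall>n P \<tau>. fine_tagged_partition p q n P \<tau> \<delta> \<longrightarrow> \<bar>RS_sum f g n P \<tau> - I\<bar> < e / (\<bar>c * d\<bar> + 1)"
    using assms unfolding has_RS_integral_iff by blast
  have "\<bar>RS_sum (\<lambda>u. c * f u) (\<lambda>u. d * g u) n P \<tau> - c * d * I\<bar> < e"
    if "fine_tagged_partition p q n P \<tau> \<delta>" for n P \<tau>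
  proof -
    have "RS_sum (\<lambda>u. c * f u) (\<lambda>u. d * g u) n P \<tau> - c * d * I = (c * d) * (RS_sum f g n P \<tau> - I)"
      unfolding RS_sum_def by (simp add: sum_distrib_left algebra_simps)
    moreover have "\<bar>c * d\<bar> * \<bar>RS_sum f g n P \<tau> - I\<bar> \<le> \<bar>c * d\<bar> * (e / (\<bar>c * d\<bar> + 1))"
      using \<delta> that by (intro mult_left_mono) (auto intro: less_imp_le)
    moreover have "\<bar>c * d\<bar> * (e / (\<bar>c * d\<bar> + 1)) < e" using e by (simp add: field_simps)
    ultimately show ?thesis by (simp add: abs_mult)
  qed
  then show "\<exists>\<delta>>0. \<forall>n P \<tau>. fine_tagged_partition p q n P \<tau> \<delta> \<longrightarrow>
      \<bar>RS_sum (\<lambda>u. c * f u) (\<lambda>u. d * g u) n P \<tau> - c * d * I\<bar> < e"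
    using \<delta>(1) by blast
qed

lemma has_RS_integral_cong:
  assumes "has_RS_integral f g p q I" "\<And>u. u \<in> {p..q} \<Longrightarrow> f u = f' u \<and> g u = g' u"
  shows "has_RS_integral f' g' p q I"
proof -
  have "RS_sum f g n P \<tau> = RS_sum f' g' n P \<tau>" if "fine_tagged_partition p q n P \<tau> d" for n P \<tau> d
    unfolding RS_sum_def
  proof (rule sum.cong)
    fix i assume "i \<in> {..<n}"
    then show "f (\<tau> i) * (g (P (Suc i)) - g (P i)) = f' (\<tau> i) * (g' (P (Suc i)) - g' (P i))"
      using assms(2) fine_tagged_partition_bounds[OF that, of i] by force
  qed simp
  then show ?thesis using assms(1) unfolding has_RS_integral_iff by metis
qed

lemma controlledD:
  "controlled g W p q \<Longrightarrow> p \<le> x \<Longrightarrow> x \<le> y \<Longrightarrow> y \<le> q \<Longrightarrow> \<bar>g y - g x\<bar> \<le> W y - W x"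
  unfolding controlled_def by blast

lemma uniform_modulusD:
  "uniform_modulus f p q \<epsilon> \<delta> \<Longrightarrow> x \<in> {p..q} \<Longrightarrow> y \<in> {p..q} \<Longrightarrow> \<bar>x - y\<bar> < \<delta> \<Longrightarrow>
    \<bar>f x - f y\<bar> \<le> \<epsilon>"
  unfolding uniform_modulus_def by blast

lemma controlled_imp_mono:
  "controlled g W p q \<Longrightarrow> p \<le> x \<Longrightarrow> x \<le> y \<Longrightarrow> y \<le> q \<Longrightarrow> W x \<le> W y"
  using controlledD[of g W p q x y] by linarith

lemma controlled_subinterval: "controlled g W a b \<Longrightarrow> u \<le> b \<Longrightarrow> controlled g W a u"
  unfolding controlled_def by auto

lemma uniform_modulus_subinterval:
  "uniform_modulus f a b \<epsilon> \<delta> \<Longrightarrow> u \<le> b \<Longrightarrow> uniform_modulus f a u \<epsilon> \<delta>"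
  unfolding uniform_modulus_def by auto

lemma uniform_modulus_exists:
  assumes "continuous_on {p..q} f" "\<epsilon> > 0"
  obtains \<delta> where "\<delta> > 0" "uniform_modulus f p q \<epsilon> \<delta>"
proof -
  have "uniformly_continuous_on {p..q} f"
    using assms(1) by (intro compact_uniformly_continuous) auto
  then obtain \<delta> where "\<delta> > 0" "\<forall>x\<in>{p..q}. \<forall>x'\<in>{p..q}. dist x' x < \<delta> \<longrightarrow> dist (f x') (f x) < \<epsilon>"
    unfolding uniformly_continuous_on_def using assms(2) by metis
  then show ?thesis
    using that[of \<delta>] unfolding uniform_modulus_def by (force simp: dist_real_def)
qed

lemma small_multiple_exists:
  fixes e C :: real
  assumes "e > 0"
  obtains \<epsilon> where "\<epsilon> > 0" "\<epsilon> * C < e"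
proof
  show "e / (\<bar>C\<bar> + 1) > 0" using assms by simp
  have "e / (\<bar>C\<bar> + 1) * C \<le> e / (\<bar>C\<bar> + 1) * \<bar>C\<bar>" using assms by (intro mult_left_mono) auto
  also have "\<dots> < e" using assms by (simp add: field_simps)
  finally show "e / (\<bar>C\<bar> + 1) * C < e" .
qed

lemma sum_blocks:
  fixes h :: "nat \<Rightarrow> 'a::comm_monoid_add"
  assumes "\<And>i. i < n \<Longrightarrow> m i \<le> m (Suc i)"
  shows "(\<Sum>i<n. \<Sum>j\<in>{m i..<m (Suc i)}. h j) = (\<Sum>j\<in>{m 0..<m n}. h j)"
proof -
  have "m 0 \<le> m n \<and> (\<Sum>i<n. \<Sum>j\<in>{m i..<m (Suc i)}. h j) = (\<Sum>j\<in>{m 0..<m n}. h j)"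
    using assms
  proof (induction n)
    case (Suc n)
    then show ?case using sum.atLeastLessThan_concat[of "m 0" "m n" "m (Suc n)" h] by force
  qed simp
  then show ?thesis ..
qed

lemma refinement_index_map:
  assumes P: "is_partition p q n P" and r: "is_partition p q N r"
    and sub: "\<forall>i\<le>n. \<exists>j\<le>N. P i = r j"
  obtains m where "m 0 = 0" "m n = N" "\<And>i. i < n \<Longrightarrow> m i < m (Suc i)"
    "\<And>i. i \<le> n \<Longrightarrow> m i \<le> N \<and> P i = r (m i)"
proof -
  obtain m where m: "\<And>i. i \<le> n \<Longrightarrow> m i \<le> N \<and> P i = r (m i)" using sub by metis
  have "m i < m (Suc i)" if "i < n" for i
  proof (rule ccontr)
    assume "\<not> m i < m (Suc i)"
    then have "r (m (Suc i)) \<le> r (m i)" using is_partition_mono[OF r] m[of i] that by simp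
    moreover have "P i < P (Suc i)" using P that unfolding is_partition_def by simp
    ultimately show False using m[of i] m[of "Suc i"] that by simp
  qed
  moreover have "m 0 = 0"
  proof (rule ccontr)
    assume "m 0 \<noteq> 0"
    then have "r 0 < r (m 0)" using is_partition_strict_mono[OF r, of 0 "m 0"] m[of 0] by simp
    then show False using m[of 0] r P unfolding is_partition_def by simp
  qed
  moreover have "m n = N"
  proof (rule ccontr)
    assume "m n \<noteq> N"
    then have "r (m n) < r N" using is_partition_strict_mono[OF r, of "m n" N] m[of n] by simp
    then show False using m[of n] r P unfolding is_partition_def by simp
  qed
  ultimately show ?thesis using that m by blast
qed

text \<open>Every interval of \<open>P\<close> is a union of intervals of the refinement \<open>r\<close>, and on each of
  them the tag of \<open>P\<close> is less than \<open>\<delta>\<close> away from the left endpoint used by \<open>r\<close>.\<close>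

lemma RS_sum_refinement:
  assumes c: "controlled g W p q" and u: "uniform_modulus f p q \<epsilon> \<delta>"
    and t: "fine_tagged_partition p q n P \<tau> \<delta>" and r: "is_partition p q N r"
    and sub: "\<forall>i\<le>n. \<exists>j\<le>N. P i = r j"
  shows "\<bar>RS_sum f g n P \<tau> - RS_sum f g N r r\<bar> \<le> \<epsilon> * (W q - W p)"
proof -
  obtain m where m0: "m 0 = 0" and mn: "m n = N" and m_strict: "\<And>i. i < n \<Longrightarrow> m i < m (Suc i)"
    and m: "\<And>i. i \<le> n \<Longrightarrow> m i \<le> N \<and> P i = r (m i)"
    using refinement_index_map[OF _ r sub] t unfolding fine_tagged_partition_def by blast
  have m_mono: "\<And>i. i < n \<Longrightarrow> m i \<le> m (Suc i)" using m_strict by (simp add: less_imp_le)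
  define D where "D j = g (r (Suc j)) - g (r j)" for j
  have "g (P (Suc i)) - g (P i) = (\<Sum>j\<in>{m i..<m (Suc i)}. D j)" if "i < n" for i
    using sum_Suc_diff'[of "m i" "m (Suc i)" "\<lambda>j. g (r j)"] m_mono[OF that] m[of i] m[of "Suc i"] that
    unfolding D_def by simp
  then have S_P: "RS_sum f g n P \<tau> = (\<Sum>i<n. \<Sum>j\<in>{m i..<m (Suc i)}. f (\<tau> i) * D j)"
    unfolding RS_sum_def by (auto simp: sum_distrib_left intro!: sum.cong)
  have S_r: "RS_sum f g N r r = (\<Sum>i<n. \<Sum>j\<in>{m i..<m (Suc i)}. f (r j) * D j)"
    using sum_blocks[where n = n and m = m, OF m_mono, of "\<lambda>j. f (r j) * D j"] m0 mn
    unfolding RS_sum_def D_def by (simp add: atLeast0LessThan)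
  have term_bound: "\<bar>f (\<tau> i) * D j - f (r j) * D j\<bar> \<le> \<epsilon> * (W (r (Suc j)) - W (r j))"
    if i: "i < n" and j: "j \<in> {m i..<m (Suc i)}" for i j
  proof -
    have jN: "j < N" using j m[of "Suc i"] i by auto
    have "P i \<le> r j" "r (Suc j) \<le> P (Suc i)"
      using is_partition_mono[OF r, of "m i" j] is_partition_mono[OF r, of "Suc j" "m (Suc i)"]
        j jN m[of i] m[of "Suc i"] i by auto
    moreover have "r j < r (Suc j)" "p \<le> r j" "r (Suc j) \<le> q"
      using r jN is_partition_bounds[OF r, of j] is_partition_bounds[OF r, of "Suc j"]
      unfolding is_partition_def by auto
    moreover note fine_tagged_partition_bounds[OF t i]
    ultimately have "\<bar>f (\<tau> i) - f (r j)\<bar> \<le> \<epsilon>"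
      by (intro uniform_modulusD[OF u]) auto
    moreover have "\<bar>D j\<bar> \<le> W (r (Suc j)) - W (r j)"
      unfolding D_def using controlledD[OF c] \<open>r j < r (Suc j)\<close> \<open>p \<le> r j\<close> \<open>r (Suc j) \<le> q\<close> by simp
    ultimately have "\<bar>f (\<tau> i) - f (r j)\<bar> * \<bar>D j\<bar> \<le> \<epsilon> * (W (r (Suc j)) - W (r j))"
      by (intro mult_mono) auto
    then show ?thesis by (simp add: abs_mult[symmetric] left_diff_distrib)
  qed
  have "\<bar>RS_sum f g n P \<tau> - RS_sum f g N r r\<bar>
      \<le> (\<Sum>i<n. \<Sum>j\<in>{m i..<m (Suc i)}. \<bar>f (\<tau> i) * D j - f (r j) * D j\<bar>)"
    unfolding S_P S_r sum_subtractf[symmetric]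
    by (rule order_trans[OF sum_abs]) (intro sum_mono sum_abs)
  also have "\<dots> \<le> (\<Sum>i<n. \<Sum>j\<in>{m i..<m (Suc i)}. \<epsilon> * (W (r (Suc j)) - W (r j)))"
    by (intro sum_mono term_bound) auto
  also have "\<dots> = (\<Sum>j<N. \<epsilon> * (W (r (Suc j)) - W (r j)))"
    using sum_blocks[where n = n and m = m, OF m_mono, of "\<lambda>j. \<epsilon> * (W (r (Suc j)) - W (r j))"] m0 mn
    by (simp add: atLeast0LessThan)
  also have "\<dots> = \<epsilon> * (W q - W p)"
    using sum_lessThan_telescope[of "\<lambda>j. W (r j)" N] r
    unfolding is_partition_def by (simp add: sum_distrib_left[symmetric])
  finally show ?thesis .
qed

lemma RS_sum_oscillation:
  assumes c: "controlled g W p q" and u: "uniform_modulus f p q \<epsilon> \<delta>"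
    and P: "fine_tagged_partition p q n P \<tau> \<delta>" and Q: "fine_tagged_partition p q n' Q \<sigma> \<delta>"
  shows "\<bar>RS_sum f g n P \<tau> - RS_sum f g n' Q \<sigma>\<bar> \<le> 2 * \<epsilon> * (W q - W p)"
proof -
  obtain N r where r: "is_partition p q N r" "\<forall>i\<le>n. \<exists>j\<le>N. P i = r j" "\<forall>i\<le>n'. \<exists>j\<le>N. Q i = r j"
    using common_refinement[of p q n P n' Q] P Q unfolding fine_tagged_partition_def by blast
  show ?thesis
    using RS_sum_refinement[OF c u P r(1,2)] RS_sum_refinement[OF c u Q r(1,3)] by linarith
qed

lemma fine_partition_sequence:
  assumes "p \<le> q"
  obtains n :: "nat \<Rightarrow> nat" and P :: "nat \<Rightarrow> nat \<Rightarrow> real"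
  where "\<And>\<delta>. \<delta> > 0 \<Longrightarrow> \<exists>K. \<forall>k\<ge>K. fine_tagged_partition p q (n k) (P k) (P k) \<delta>"
proof -
  have "\<exists>n P. fine_tagged_partition p q n P P (1 / Suc k)" for k :: nat
  proof -
    have "(1::real) / Suc k > 0" by simp
    then show ?thesis using fine_partition_exists[OF assms] by blast
  qed
  then obtain n P where P: "\<And>k. fine_tagged_partition p q (n k) (P k) (P k) (1 / Suc k)"
    by metis
  have "\<exists>K. \<forall>k\<ge>K. fine_tagged_partition p q (n k) (P k) (P k) \<delta>" if "\<delta> > 0" for \<delta>
  proof -
    obtain K :: nat where K: "1 / \<delta> < K" using reals_Archimedean2 by blast
    have "1 / real (Suc k) < \<delta>" if "k \<ge> K" for k
    proof -
      have "1 / \<delta> < Suc k" using K that by linarith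
      then show ?thesis using \<open>\<delta> > 0\<close> by (simp add: field_simps)
    qed
    then show ?thesis using P fine_tagged_partition_mono less_imp_le by blast
  qed
  then show ?thesis using that by blast
qed

text \<open>The sums along a sequence of ever finer partitions are Cauchy by \<open>RS_sum_oscillation\<close>;
  their limit inherits the error bound.\<close>

lemma RS_sums_converge:
  assumes pq: "p \<le> q" and fc: "continuous_on {p..q} f" and c: "controlled g W p q"
  obtains I where "\<And>\<epsilon> \<delta> n P \<tau>. \<delta> > 0 \<Longrightarrow> uniform_modulus f p q \<epsilon> \<delta> \<Longrightarrow>
      fine_tagged_partition p q n P \<tau> \<delta> \<Longrightarrow> \<bar>RS_sum f g n P \<tau> - I\<bar> \<le> 2 * \<epsilon> * (W q - W p)"
proof -
  obtain nn :: "nat \<Rightarrow> nat" and PP :: "nat \<Rightarrow> nat \<Rightarrow> real" where eventually_fine: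
      "\<And>\<delta>. \<delta> > 0 \<Longrightarrow> \<exists>K. \<forall>k\<ge>K. fine_tagged_partition p q (nn k) (PP k) (PP k) \<delta>"
    using fine_partition_sequence[OF pq] by metis
  define S where "S k = RS_sum f g (nn k) (PP k) (PP k)" for k
  have "Cauchy S"
  proof (rule metric_CauchyI)
    fix e :: real assume "e > 0"
    then obtain \<epsilon> where \<epsilon>: "\<epsilon> > 0" "2 * \<epsilon> * (W q - W p) < e"
      using small_multiple_exists[of e "2 * (W q - W p)"] by (auto simp: ac_simps)
    obtain \<delta> where \<delta>: "\<delta> > 0" "uniform_modulus f p q \<epsilon> \<delta>" using uniform_modulus_exists[OF fc \<epsilon>(1)] by blast
    obtain K where K: "\<forall>k\<ge>K. fine_tagged_partition p q (nn k) (PP k) (PP k) \<delta>"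
      using eventually_fine[OF \<delta>(1)] by blast
    have "dist (S m) (S n) < e" if "K \<le> m" "K \<le> n" for m n
      using RS_sum_oscillation[OF c \<delta>(2) K[rule_format, OF that(1)] K[rule_format, OF that(2)]] \<epsilon>(2)
      unfolding S_def dist_real_def by linarith
    then show "\<exists>M. \<forall>m\<ge>M. \<forall>n\<ge>M. dist (S m) (S n) < e" by blast
  qed
  then obtain I where I: "S \<longlonglongrightarrow> I" using Cauchy_convergent_iff convergent_def by blast
  have "\<bar>RS_sum f g n P \<tau> - I\<bar> \<le> 2 * \<epsilon> * (W q - W p)"
    if \<delta>: "\<delta> > 0" and u: "uniform_modulus f p q \<epsilon> \<delta>" and t: "fine_tagged_partition p q n P \<tau> \<delta>"
    for \<epsilon> \<delta> n P \<tau>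
  proof -
    obtain K where K: "\<forall>k\<ge>K. fine_tagged_partition p q (nn k) (PP k) (PP k) \<delta>"
      using eventually_fine[OF \<delta>] by blast
    have "(\<lambda>k. \<bar>RS_sum f g n P \<tau> - S k\<bar>) \<longlonglongrightarrow> \<bar>RS_sum f g n P \<tau> - I\<bar>"
      by (intro tendsto_intros I)
    moreover have "eventually (\<lambda>k. \<bar>RS_sum f g n P \<tau> - S k\<bar> \<le> 2 * \<epsilon> * (W q - W p)) sequentially"
      unfolding eventually_sequentially S_def
      by (intro exI[of _ K] allI impI RS_sum_oscillation[OF c u t] K[rule_format])
    ultimately show ?thesis by (rule tendsto_upperbound) simp
  qed
  then show ?thesis using that by blast
qed

lemma RS_integral_controlled:
  assumes pq: "p \<le> q" and fc: "continuous_on {p..q} f" and c: "controlled g W p q"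
  shows "has_RS_integral f g p q (RS_integral f g p q)"
    and "\<delta> > 0 \<Longrightarrow> uniform_modulus f p q \<epsilon> \<delta> \<Longrightarrow> fine_tagged_partition p q n P \<tau> \<delta> \<Longrightarrow>
      \<bar>RS_sum f g n P \<tau> - RS_integral f g p q\<bar> \<le> 2 * \<epsilon> * (W q - W p)"
proof -
  obtain I where I: "\<And>\<epsilon> \<delta> n P \<tau>. \<delta> > 0 \<Longrightarrow> uniform_modulus f p q \<epsilon> \<delta> \<Longrightarrow>
      fine_tagged_partition p q n P \<tau> \<delta> \<Longrightarrow> \<bar>RS_sum f g n P \<tau> - I\<bar> \<le> 2 * \<epsilon> * (W q - W p)"
    using RS_sums_converge[OF pq fc c] by blast
  have "has_RS_integral f g p q I"
    unfolding has_RS_integral_iff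
  proof (intro allI impI)
    fix e :: real assume "e > 0"
    then obtain \<epsilon> where \<epsilon>: "\<epsilon> > 0" "2 * \<epsilon> * (W q - W p) < e"
      using small_multiple_exists[of e "2 * (W q - W p)"] by (auto simp: ac_simps)
    obtain \<delta> where \<delta>: "\<delta> > 0" "uniform_modulus f p q \<epsilon> \<delta>" using uniform_modulus_exists[OF fc \<epsilon>(1)] by blast
    show "\<exists>\<delta>>0. \<forall>n P \<tau>. fine_tagged_partition p q n P \<tau> \<delta> \<longrightarrow> \<bar>RS_sum f g n P \<tau> - I\<bar> < e"
      using I \<delta> \<epsilon>(2) by (meson le_less_trans)
  qed
  then have "RS_integral f g p q = I" using RS_integral_eqI pq by blast
  then show "has_RS_integral f g p q (RS_integral f g p q)"
    and "\<delta> > 0 \<Longrightarrow> uniform_modulus f p q \<epsilon> \<delta> \<Longrightarrow> fine_tagged_partition p q n P \<tau> \<delta> \<Longrightarrow>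
      \<bar>RS_sum f g n P \<tau> - RS_integral f g p q\<bar> \<le> 2 * \<epsilon> * (W q - W p)"
    using \<open>has_RS_integral f g p q I\<close> I by simp_all
qed

text \<open>A fine partition of \<open>[a, u]\<close> extended by the point \<open>u'\<close> is a fine partition of
  \<open>[a, u']\<close>, and the two Riemann--Stieltjes sums differ by a single term.\<close>

lemma RS_integral_increment:
  assumes uu': "u \<in> {a..b}" "u' \<in> {a..b}" "\<bar>u' - u\<bar> < \<delta>"
    and fc: "continuous_on {a..b} f" and c: "controlled g W a b"
    and M: "\<forall>x\<in>{a..b}. \<bar>f x\<bar> \<le> M" and \<delta>: "\<delta> > 0" "uniform_modulus f a b \<epsilon> \<delta>"
  shows "\<bar>RS_integral f g a u' - RS_integral f g a u\<bar> \<le> 4 * \<epsilon> * (W b - W a) + M * \<bar>g u' - g u\<bar>"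
  using uu'
proof (induction u u' rule: linorder_less_wlog)
  case (less u u')
  have \<epsilon>: "\<epsilon> \<ge> 0" using uniform_modulusD[OF \<delta>(2), of a a] less \<delta>(1) by simp
  have error: "\<bar>RS_sum f g n P \<tau> - RS_integral f g a v\<bar> \<le> 2 * \<epsilon> * (W b - W a)"
    if v: "a \<le> v" "v \<le> b" and t: "fine_tagged_partition a v n P \<tau> \<delta>" for v n P \<tau>
  proof -
    have "W v \<le> W b" using controlled_imp_mono[OF c v order_refl] v by simp
    moreover have "\<bar>RS_sum f g n P \<tau> - RS_integral f g a v\<bar> \<le> 2 * \<epsilon> * (W v - W a)"
      using RS_integral_controlled(2)[OF v(1) _ controlled_subinterval[OF c v(2)] \<delta>(1)
          uniform_modulus_subinterval[OF \<delta>(2) v(2)] t] continuous_on_subset[OF fc] v by auto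
    ultimately show ?thesis using \<epsilon> by (smt (verit) mult_left_mono)
  qed
  obtain n P where P: "fine_tagged_partition a u n P P \<delta>"
    using fine_partition_exists[of a u \<delta>] less \<delta>(1) by auto
  then have Pn: "P n = u" and P_part: "is_partition a u n P"
    unfolding fine_tagged_partition_def is_partition_def by auto
  define P' where "P' = P(Suc n := u')"
  have P': "fine_tagged_partition a u' (Suc n) P' P' \<delta>"
    using P is_partition_extend[OF P_part less(1)] Pn less
    unfolding P'_def fine_tagged_partition_def by (auto simp: less_Suc_eq)
  have "RS_sum f g (Suc n) P' P' = RS_sum f g n P P + f u * (g u' - g u)"
    unfolding RS_sum_def P'_def using Pn by (auto intro!: sum.cong)
  moreover have "\<bar>f u * (g u' - g u)\<bar> \<le> M * \<bar>g u' - g u\<bar>"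
    unfolding abs_mult using M less by (intro mult_right_mono) auto
  moreover have "\<bar>RS_sum f g n P P - RS_integral f g a u\<bar> \<le> 2 * \<epsilon> * (W b - W a)"
    using error[OF _ _ P] less by auto
  moreover have "\<bar>RS_sum f g (Suc n) P' P' - RS_integral f g a u'\<bar> \<le> 2 * \<epsilon> * (W b - W a)"
    using error[OF _ _ P'] less by auto
  ultimately show ?case by linarith
next
  case (refl u)
  have "\<epsilon> \<ge> 0" using uniform_modulusD[OF \<delta>(2), of a a] refl \<delta>(1) by simp
  moreover have "W a \<le> W b" using controlled_imp_mono[OF c order_refl _ order_refl] refl by simp
  ultimately show ?case by simp
next
  case (sym u u')
  then show ?case by (simp add: abs_minus_commute)
qed

lemma continuous_on_RS_integral:
  assumes ab: "a \<le> b" and fc: "continuous_on {a..b} f" and gc: "continuous_on {a..b} g"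
    and c: "controlled g W a b"
  shows "continuous_on {a..b} (\<lambda>u. RS_integral f g a u)"
  unfolding continuous_on_iff
proof (intro ballI allI impI)
  fix x e :: real assume x: "x \<in> {a..b}" and e: "e > 0"
  obtain M where M: "\<forall>x\<in>{a..b}. \<bar>f x\<bar> \<le> M"
    using compact_imp_bounded[OF compact_continuous_image[OF fc compact_Icc]]
    unfolding bounded_real by auto
  then have M_nonneg: "M \<ge> 0" using ab by force
  obtain \<epsilon> where \<epsilon>: "\<epsilon> > 0" and small_\<epsilon>: "4 * \<epsilon> * (W b - W a) < e / 2"
    using small_multiple_exists[of "e / 2" "4 * (W b - W a)"] e by (auto simp: ac_simps)
  obtain \<delta> where \<delta>: "\<delta> > 0" "uniform_modulus f a b \<epsilon> \<delta>" using uniform_modulus_exists[OF fc \<epsilon>] by blast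
  have "e / (2 * (M + 1)) > 0" using e M_nonneg by simp
  then obtain dg where dg: "dg > 0"
      "\<forall>x'\<in>{a..b}. dist x' x < dg \<longrightarrow> dist (g x') (g x) < e / (2 * (M + 1))"
    using gc x unfolding continuous_on_iff by blast
  have "dist (RS_integral f g a x') (RS_integral f g a x) < e"
    if x': "x' \<in> {a..b}" and close: "dist x' x < min \<delta> dg" for x'
  proof -
    have "M * \<bar>g x' - g x\<bar> \<le> M * (e / (2 * (M + 1)))"
      using dg close x' M_nonneg by (intro mult_left_mono) (auto simp: dist_real_def)
    also have "\<dots> \<le> e / 2" using M_nonneg e by (simp add: field_simps)
    finally show ?thesis
      using RS_integral_increment[OF x x' _ fc c M \<delta>] small_\<epsilon> close by (auto simp: dist_real_def)
  qed
  then show "\<exists>d>0. \<forall>x'\<in>{a..b}. dist x' x < d \<longrightarrow> dist (RS_integral f g a x') (RS_integral f g a x) < e"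
    using \<delta>(1) dg(1) by (intro exI[of _ "min \<delta> dg"]) auto
qed

section \<open>Path length\<close>

lemma variation_sums_extend:
  assumes "v \<in> variation_sums \<gamma> a x" "x < y"
  shows "v + norm (\<gamma> y - \<gamma> x) \<in> variation_sums \<gamma> a y"
proof -
  obtain n P where P: "is_partition a x n P" "v = (\<Sum>i<n. norm (\<gamma> (P (Suc i)) - \<gamma> (P i)))"
    using assms(1) unfolding variation_sums_def by auto
  have "(\<Sum>i<Suc n. norm (\<gamma> ((P(Suc n := y)) (Suc i)) - \<gamma> ((P(Suc n := y)) i))) = v + norm (\<gamma> y - \<gamma> x)"
    using P unfolding is_partition_def by (auto intro!: sum.cong)
  then show ?thesis
    unfolding variation_sums_def using is_partition_extend[OF P(1) assms(2)]
    by (intro CollectI exI[of _ "Suc n"] exI[of _ "P(Suc n := y)"]) simp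
qed

lemma variation_sums_nonempty: "a \<le> x \<Longrightarrow> variation_sums \<gamma> a x \<noteq> {}"
  using fine_partition_exists[of a x 1] unfolding variation_sums_def fine_tagged_partition_def by force

lemma bdd_above_variation_sums:
  assumes "bounded_variation_on \<gamma> a b" "x \<le> b"
  shows "bdd_above (variation_sums \<gamma> a x)"
proof (cases "x = b")
  case True
  then show ?thesis using assms unfolding bounded_variation_on_def by simp
next
  case False
  then have "x < b" using assms by simp
  obtain M where M: "\<forall>v\<in>variation_sums \<gamma> a b. v \<le> M"
    using assms(1) unfolding bounded_variation_on_def bdd_above_def by auto
  have "v \<le> M" if "v \<in> variation_sums \<gamma> a x" for v
  proof -
    have "v + norm (\<gamma> b - \<gamma> x) \<le> M" using M variation_sums_extend[OF that \<open>x < b\<close>] by blast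
    then show ?thesis using norm_ge_zero[of "\<gamma> b - \<gamma> x"] by linarith
  qed
  then show ?thesis unfolding bdd_above_def by blast
qed

lemma path_length_increment:
  assumes "bounded_variation_on \<gamma> a b" "a \<le> x" "x \<le> y" "y \<le> b"
  shows "path_length \<gamma> a x + norm (\<gamma> y - \<gamma> x) \<le> path_length \<gamma> a y"
proof (cases "x = y")
  case True
  then show ?thesis by simp
next
  case False
  then have "x < y" using assms by simp
  have "Sup (variation_sums \<gamma> a x) \<le> path_length \<gamma> a y - norm (\<gamma> y - \<gamma> x)"
  proof (rule cSup_least[OF variation_sums_nonempty[OF assms(2)]])
    fix v assume "v \<in> variation_sums \<gamma> a x"
    then have "v + norm (\<gamma> y - \<gamma> x) \<le> path_length \<gamma> a y"
      unfolding path_length_def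
      using variation_sums_extend \<open>x < y\<close> bdd_above_variation_sums[OF assms(1,4)] by (blast intro: cSup_upper)
    then show "v \<le> path_length \<gamma> a y - norm (\<gamma> y - \<gamma> x)" by simp
  qed
  then show ?thesis unfolding path_length_def by simp
qed

lemma path_length_refl: "path_length \<gamma> a a = 0"
proof -
  have "variation_sums \<gamma> a a \<subseteq> {0}"
    unfolding variation_sums_def using is_partition_degenerate by fastforce
  then have "variation_sums \<gamma> a a = {0}" using variation_sums_nonempty[of a a \<gamma>] by blast
  then show ?thesis unfolding path_length_def by simp
qed

lemma path_length_mono:
  "bounded_variation_on \<gamma> a b \<Longrightarrow> a \<le> x \<Longrightarrow> x \<le> y \<Longrightarrow> y \<le> b \<Longrightarrow> path_length \<gamma> a x \<le> path_length \<gamma> a y"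
  using path_length_increment[of \<gamma> a b x y] norm_ge_zero[of "\<gamma> y - \<gamma> x"] by linarith

lemma path_length_nonneg:
  "bounded_variation_on \<gamma> a b \<Longrightarrow> x \<in> {a..b} \<Longrightarrow> path_length \<gamma> a x \<ge> 0"
  using path_length_mono[of \<gamma> a b a x] path_length_refl[of \<gamma> a] by simp

lemma controlled_inner_path_length:
  fixes \<gamma> :: "real \<Rightarrow> 'v::real_inner"
  assumes "bounded_variation_on \<gamma> a b"
  shows "controlled (\<lambda>v. \<gamma> v \<bullet> e) (\<lambda>v. norm e * path_length \<gamma> a v) a b"
  unfolding controlled_def
proof (intro allI impI)
  fix x y assume xy: "a \<le> x" "x \<le> y" "y \<le> b"
  have "\<bar>\<gamma> y \<bullet> e - \<gamma> x \<bullet> e\<bar> \<le> norm (\<gamma> y - \<gamma> x) * norm e"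
    using Cauchy_Schwarz_ineq2[of "\<gamma> y - \<gamma> x" e] by (simp add: inner_diff_left)
  also have "\<dots> \<le> (path_length \<gamma> a y - path_length \<gamma> a x) * norm e"
    using path_length_increment[OF assms xy] by (intro mult_right_mono) auto
  finally show "\<bar>\<gamma> y \<bullet> e - \<gamma> x \<bullet> e\<bar> \<le> norm e * path_length \<gamma> a y - norm e * path_length \<gamma> a x"
    by (simp add: algebra_simps)
qed

section \<open>The signature\<close>

lemma continuous_on_sig_coord:
  fixes \<gamma> :: "real \<Rightarrow> 'v::euclidean_space"
  assumes "continuous_on {a..b} \<gamma>" "bounded_variation_on \<gamma> a b" "a \<le> b"
  shows "continuous_on {a..b} (sig_coord \<gamma> a w)"
proof (induction w)
  case Nil
  then show ?case by simp
next
  case (Cons e w)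
  have "continuous_on {a..b} (\<lambda>v. \<gamma> v \<bullet> e)" using assms(1) by (intro continuous_intros)
  then show ?case
    using continuous_on_RS_integral[OF assms(3) Cons.IH _ controlled_inner_path_length[OF assms(2)]]
    by simp
qed

lemma has_RS_integral_sig_coord:
  fixes \<gamma> :: "real \<Rightarrow> 'v::euclidean_space"
  assumes "continuous_on {a..b} \<gamma>" "bounded_variation_on \<gamma> a b" "u \<in> {a..b}"
  shows "has_RS_integral (sig_coord \<gamma> a w) (\<lambda>v. \<gamma> v \<bullet> e) a u (sig_coord \<gamma> a (e # w) u)"
proof -
  have u: "a \<le> u" "u \<le> b" using assms(3) by auto
  have "continuous_on {a..u} (sig_coord \<gamma> a w)"
    by (rule continuous_on_subset[OF continuous_on_sig_coord[OF assms(1,2)]]) (use u in auto)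
  then show ?thesis
    using RS_integral_controlled(1)[OF u(1) _ controlled_subinterval[OF controlled_inner_path_length[OF assms(2)] u(2)]]
    by simp
qed

lemma sig_coord_scaleR:
  fixes \<gamma> :: "real \<Rightarrow> 'v::euclidean_space"
  assumes "continuous_on {a..b} \<gamma>" "bounded_variation_on \<gamma> a b" "u \<in> {a..b}"
  shows "sig_coord (\<lambda>v. x *\<^sub>R \<gamma> v) a w u = x ^ length w * sig_coord \<gamma> a w u"
  using assms(3)
proof (induction w arbitrary: u)
  case Nil
  then show ?case by simp
next
  case (Cons e w)
  have "has_RS_integral (\<lambda>v. x ^ length w * sig_coord \<gamma> a w v) (\<lambda>v. x * (\<gamma> v \<bullet> e)) a u
      (x ^ length w * x * sig_coord \<gamma> a (e # w) u)"
    by (rule has_RS_integral_mult[OF has_RS_integral_sig_coord[OF assms(1,2) Cons.prems]])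
  then have "has_RS_integral (sig_coord (\<lambda>v. x *\<^sub>R \<gamma> v) a w) (\<lambda>v. (x *\<^sub>R \<gamma> v) \<bullet> e) a u
      (x ^ length w * x * sig_coord \<gamma> a (e # w) u)"
    by (rule has_RS_integral_cong) (use Cons.IH Cons.prems in auto)
  then show ?case using RS_integral_eqI Cons.prems by (simp add: algebra_simps)
qed

lemma finite_words: "finite (words k :: 'v::euclidean_space list set)"
proof -
  have "words k = {w. set w \<subseteq> (Basis :: 'v set) \<and> length w = k}" unfolding words_def by auto
  then show ?thesis using finite_lists_length_eq[OF finite_Basis] by simp
qed

lemma words_Suc: "words (Suc k) = (\<lambda>x. fst x # snd x) ` (Basis \<times> words k)"
proof
  show "words (Suc k) \<subseteq> (\<lambda>x. fst x # snd x) ` (Basis \<times> words k)"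
  proof
    fix w assume "w \<in> words (Suc k)"
    then obtain e w' where "w = e # w'" "e \<in> Basis" "w' \<in> words k"
      unfolding words_def by (cases w) auto
    then show "w \<in> (\<lambda>x. fst x # snd x) ` (Basis \<times> words k)" by (intro image_eqI[of _ _ "(e, w')"]) auto
  qed
qed (auto simp: words_def)

lemma L2_set_sum_le:
  fixes h :: "nat \<Rightarrow> 'a \<Rightarrow> real" and n :: nat
  shows "L2_set (\<lambda>x. \<Sum>i<n. h i x) A \<le> (\<Sum>i<n. L2_set (h i) A)"
proof (induction n)
  case 0
  then show ?case by (simp add: L2_set_def)
next
  case (Suc n)
  have "L2_set (\<lambda>x. \<Sum>i<Suc n. h i x) A \<le> L2_set (\<lambda>x. \<Sum>i<n. h i x) A + L2_set (h n) A"
    using L2_set_triangle_ineq[of "\<lambda>x. \<Sum>i<n. h i x" "h n" A] by simp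
  then show ?case using Suc by simp
qed

lemma L2_set_mult_Times:
  assumes "finite A" "finite B"
  shows "L2_set (\<lambda>x. c (snd x) * d (fst x)) (B \<times> A) = L2_set c A * L2_set d B"
proof -
  have "(\<Sum>x\<in>B \<times> A. (c (snd x) * d (fst x))\<^sup>2) = (\<Sum>e\<in>B. \<Sum>w\<in>A. (c w * d e)\<^sup>2)"
    by (simp add: sum.cartesian_product case_prod_beta)
  also have "\<dots> = (\<Sum>w\<in>A. (c w)\<^sup>2) * (\<Sum>e\<in>B. (d e)\<^sup>2)"
    by (simp add: sum_product power_mult_distrib mult.commute) (rule sum.swap)
  finally show ?thesis unfolding L2_set_def by (simp add: real_sqrt_mult)
qed

lemma L2_set_inner_Basis: "L2_set (\<lambda>e. d \<bullet> e) Basis = norm d"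
  unfolding L2_set_def norm_eq_sqrt_inner using euclidean_inner[of d d]
  by (simp add: power2_eq_square)

text \<open>A left-endpoint Riemann sum for \<open>\<integral>\<^sub>y\<^sup>z v\<^sup>k / k! dv\<close>.\<close>

lemma power_div_fact_increment_le:
  fixes y z :: real
  assumes "0 \<le> y" "y \<le> z"
  shows "y ^ k / fact k * (z - y) \<le> z ^ Suc k / fact (Suc k) - y ^ Suc k / fact (Suc k)"
proof -
  have "real (Suc k) * y ^ k = (\<Sum>p<Suc k. y ^ p * y ^ (k - p))"
    by (simp add: power_add[symmetric])
  also have "\<dots> \<le> (\<Sum>p<Suc k. z ^ p * y ^ (k - p))"
    using assms by (intro sum_mono mult_right_mono power_mono) auto
  finally have "real (Suc k) * y ^ k * (z - y) \<le> (z - y) * (\<Sum>p<Suc k. z ^ p * y ^ (k - p))"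
    using assms by (simp add: mult.commute mult_left_mono)
  also have "\<dots> = z ^ Suc k - y ^ Suc k" by (rule diff_power_eq_sum[symmetric])
  finally have "real (Suc k) * y ^ k * (z - y) / fact (Suc k) \<le> (z ^ Suc k - y ^ Suc k) / fact (Suc k)"
    by (intro divide_right_mono) auto
  then show ?thesis by (simp add: diff_divide_distrib)
qed

lemma has_RS_integral_uniform_fineness:
  assumes "finite A" "\<And>x. x \<in> A \<Longrightarrow> has_RS_integral (f x) (g x) p q (I x)" "\<epsilon> > 0"
  obtains \<delta> where "\<delta> > 0"
    "\<And>x n P \<tau>. x \<in> A \<Longrightarrow> fine_tagged_partition p q n P \<tau> \<delta> \<Longrightarrow> \<bar>RS_sum (f x) (g x) n P \<tau> - I x\<bar> < \<epsilon>"
proof -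
  have "\<exists>\<delta>>0. \<forall>x\<in>A. \<forall>n P \<tau>. fine_tagged_partition p q n P \<tau> \<delta> \<longrightarrow> \<bar>RS_sum (f x) (g x) n P \<tau> - I x\<bar> < \<epsilon>"
    using assms(1,2)
  proof (induction A rule: finite_induct)
    case empty
    then show ?case by (intro exI[of _ 1]) auto
  next
    case (insert x A)
    obtain d1 where d1: "d1 > 0"
        "\<forall>y\<in>A. \<forall>n P \<tau>. fine_tagged_partition p q n P \<tau> d1 \<longrightarrow> \<bar>RS_sum (f y) (g y) n P \<tau> - I y\<bar> < \<epsilon>"
      using insert by auto
    obtain d2 where d2: "d2 > 0"
        "\<forall>n P \<tau>. fine_tagged_partition p q n P \<tau> d2 \<longrightarrow> \<bar>RS_sum (f x) (g x) n P \<tau> - I x\<bar> < \<epsilon>"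
      using insert.prems[of x] assms(3) unfolding has_RS_integral_iff by blast
    show ?case
      using d1 d2 fine_tagged_partition_mono[of p q _ _ _ "min d1 d2" d1]
        fine_tagged_partition_mono[of p q _ _ _ "min d1 d2" d2]
      by (intro exI[of _ "min d1 d2"]) auto
  qed
  then show ?thesis using that by blast
qed

text \<open>The induction step of the factorial decay, for a single Riemann--Stieltjes sum: the
  increments of \<open>\<gamma>\<close> are bounded by those of the path length, and the sum telescopes by
  \<open>power_div_fact_increment_le\<close>.\<close>

lemma L2_RS_sum_le:
  fixes \<gamma> :: "real \<Rightarrow> 'v::euclidean_space" and F :: "'w \<Rightarrow> real \<Rightarrow> real"
  assumes bv: "bounded_variation_on \<gamma> a b" and P: "is_partition a u n P" "u \<le> b" and W: "finite W"
    and bound: "\<And>v. v \<in> {a..u} \<Longrightarrow> L2_set (\<lambda>w. F w v) W \<le> path_length \<gamma> a v ^ k / fact k"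
  shows "L2_set (\<lambda>x. RS_sum (F (snd x)) (\<lambda>v. \<gamma> v \<bullet> fst x) n P P) (Basis \<times> W)
    \<le> path_length \<gamma> a u ^ Suc k / fact (Suc k)"
proof -
  define V where "V = path_length \<gamma> a"
  define d where "d i = \<gamma> (P (Suc i)) - \<gamma> (P i)" for i
  have P_in: "P i \<in> {a..u}" if "i \<le> n" for i using is_partition_bounds[OF P(1) that] by auto
  have step: "0 \<le> V (P i) \<and> norm (d i) \<le> V (P (Suc i)) - V (P i) \<and> V (P i) \<le> V (P (Suc i))"
    if "i < n" for i
  proof -
    have "P i \<le> P (Suc i)" using P(1) that unfolding is_partition_def by (simp add: less_imp_le)
    then have "0 \<le> V (P i)" "norm (d i) \<le> V (P (Suc i)) - V (P i)"
      using path_length_increment[OF bv, of "P i" "P (Suc i)"] path_length_nonneg[OF bv, of "P i"]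
        P_in[of i] P_in[of "Suc i"] that P(2) unfolding V_def d_def by auto
    then show ?thesis using norm_ge_zero[of "d i"] by linarith
  qed
  have "L2_set (\<lambda>x. RS_sum (F (snd x)) (\<lambda>v. \<gamma> v \<bullet> fst x) n P P) (Basis \<times> W)
      = L2_set (\<lambda>x. \<Sum>i<n. F (snd x) (P i) * (d i \<bullet> fst x)) (Basis \<times> W)"
    unfolding RS_sum_def d_def by (simp add: inner_diff_left)
  also have "\<dots> \<le> (\<Sum>i<n. L2_set (\<lambda>x. F (snd x) (P i) * (d i \<bullet> fst x)) (Basis \<times> W))"
    by (rule L2_set_sum_le)
  also have "\<dots> = (\<Sum>i<n. L2_set (\<lambda>w. F w (P i)) W * norm (d i))"
  proof (rule sum.cong[OF refl])
    fix i
    show "L2_set (\<lambda>x. F (snd x) (P i) * (d i \<bullet> fst x)) (Basis \<times> W) = L2_set (\<lambda>w. F w (P i)) W * norm (d i)"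
      using L2_set_mult_Times[OF W finite_Basis, of "\<lambda>w. F w (P i)" "\<lambda>e. d i \<bullet> e"]
      by (simp add: L2_set_inner_Basis)
  qed
  also have "\<dots> \<le> (\<Sum>i<n. V (P i) ^ k / fact k * (V (P (Suc i)) - V (P i)))"
    using bound[OF P_in] step unfolding V_def by (intro sum_mono mult_mono') auto
  also have "\<dots> \<le> (\<Sum>i<n. V (P (Suc i)) ^ Suc k / fact (Suc k) - V (P i) ^ Suc k / fact (Suc k))"
    using step by (intro sum_mono power_div_fact_increment_le) auto
  also have "\<dots> = V u ^ Suc k / fact (Suc k)"
    using sum_lessThan_telescope[of "\<lambda>i. V (P i) ^ Suc k / fact (Suc k)" n] P(1)
    unfolding is_partition_def V_def by (simp add: path_length_refl)
  finally show ?thesis unfolding V_def .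
qed

lemma L2_sig_coord_le:
  fixes \<gamma> :: "real \<Rightarrow> 'v::euclidean_space"
  assumes gc: "continuous_on {a..b} \<gamma>" and bv: "bounded_variation_on \<gamma> a b"
  shows "u \<in> {a..b} \<Longrightarrow> L2_set (\<lambda>w. sig_coord \<gamma> a w u) (words k) \<le> path_length \<gamma> a u ^ k / fact k"
proof (induction k arbitrary: u)
  case 0
  have "words 0 = {[] :: 'v list}" unfolding words_def by auto
  then show ?case by (simp add: L2_set_def)
next
  case (Suc k)
  have u: "a \<le> u" "u \<le> b" using Suc.prems by auto
  define A where "A = (Basis :: 'v set) \<times> (words k :: 'v list set)"
  have A: "finite A" unfolding A_def by (simp add: finite_words)
  define I where "I x = sig_coord \<gamma> a (fst x # snd x) u" for x :: "'v \<times> 'v list"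
  define S where "S n P x = RS_sum (sig_coord \<gamma> a (snd x)) (\<lambda>v. \<gamma> v \<bullet> fst x) n P P" for n P x
  have "L2_set I A \<le> path_length \<gamma> a u ^ Suc k / fact (Suc k) + e" if e: "e > 0" for e
  proof -
    define \<epsilon> where "\<epsilon> = e / (real (card A) + 1)"
    have \<epsilon>: "\<epsilon> > 0" unfolding \<epsilon>_def using e by (simp add: add_nonneg_pos)
    obtain \<delta> where \<delta>: "\<delta> > 0" "\<And>x n P. x \<in> A \<Longrightarrow> fine_tagged_partition a u n P P \<delta> \<Longrightarrow> \<bar>S n P x - I x\<bar> < \<epsilon>"
      using has_RS_integral_uniform_fineness[OF A has_RS_integral_sig_coord[OF gc bv Suc.prems] \<epsilon>]
      unfolding S_def I_def by metis
    obtain n P where P: "fine_tagged_partition a u n P P \<delta>" using fine_partition_exists[OF u(1) \<delta>(1)] by blast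
    have "L2_set (\<lambda>x. I x - S n P x) A \<le> (\<Sum>x\<in>A. \<bar>I x - S n P x\<bar>)" by (rule L2_set_le_sum_abs)
    also have "\<dots> \<le> (\<Sum>x\<in>A. \<epsilon>)" using \<delta>(2)[OF _ P] by (intro sum_mono) (force simp: abs_minus_commute)
    also have "\<dots> \<le> e" unfolding \<epsilon>_def using e by (simp add: field_simps)
    finally have "L2_set (\<lambda>x. I x - S n P x) A \<le> e" .
    moreover have "L2_set (S n P) A \<le> path_length \<gamma> a u ^ Suc k / fact (Suc k)"
      unfolding S_def A_def
      using P Suc.IH u by (intro L2_RS_sum_le[OF bv _ u(2) finite_words]) (auto simp: fine_tagged_partition_def)
    moreover have "L2_set I A \<le> L2_set (\<lambda>x. I x - S n P x) A + L2_set (S n P) A"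
      using L2_set_triangle_ineq[of "\<lambda>x. I x - S n P x" "S n P" A] by simp
    ultimately show ?thesis by linarith
  qed
  then have "L2_set I A \<le> path_length \<gamma> a u ^ Suc k / fact (Suc k)" by (rule field_le_epsilon)
  moreover have "L2_set (\<lambda>w. sig_coord \<gamma> a w u) (words (Suc k)) = L2_set I A"
    unfolding L2_set_def words_Suc A_def I_def by (subst sum.reindex) (auto simp: inj_on_def)
  ultimately show ?case by simp
qed

lemma hs_inner_sig_level_le:
  fixes \<gamma> \<sigma> :: "real \<Rightarrow> 'v::euclidean_space"
  assumes "continuous_on {a..b} \<gamma>" "bounded_variation_on \<gamma> a b"
    "continuous_on {a..b} \<sigma>" "bounded_variation_on \<sigma> a b" "s \<in> {a..b}" "t \<in> {a..b}"
  shows "\<bar>hs_inner k (sig_level \<gamma> a k s) (sig_level \<sigma> a k t)\<bar>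
    \<le> path_length \<gamma> a s ^ k / fact k * (path_length \<sigma> a t ^ k / fact k)"
proof -
  have "\<bar>hs_inner k (sig_level \<gamma> a k s) (sig_level \<sigma> a k t)\<bar>
      \<le> (\<Sum>w\<in>words k. \<bar>sig_coord \<gamma> a w s\<bar> * \<bar>sig_coord \<sigma> a w t\<bar>)"
    unfolding hs_inner_def sig_level_def by (simp add: sum_abs[THEN order_trans] abs_mult)
  also have "\<dots> \<le> L2_set (\<lambda>w. sig_coord \<gamma> a w s) (words k) * L2_set (\<lambda>w. sig_coord \<sigma> a w t) (words k)"
    by (rule L2_set_mult_ineq)
  also have "\<dots> \<le> path_length \<gamma> a s ^ k / fact k * (path_length \<sigma> a t ^ k / fact k)"
    using L2_sig_coord_le[OF assms(1,2,5)] L2_sig_coord_le[OF assms(3,4,6)]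
    by (intro mult_mono') auto
  finally show ?thesis .
qed

lemma sig_kernel_scaleR:
  fixes \<gamma> :: "real \<Rightarrow> 'v::euclidean_space"
  assumes "continuous_on {a..b} \<gamma>" "bounded_variation_on \<gamma> a b" "s \<in> {a..b}"
  shows "sig_kernel (\<lambda>u. x *\<^sub>R \<gamma> u) \<sigma> a s t
    = (\<Sum>k. hs_inner k (sig_level \<gamma> a k s) (sig_level \<sigma> a k t) * x ^ k)"
proof -
  have "hs_inner k (sig_level (\<lambda>u. x *\<^sub>R \<gamma> u) a k s) (sig_level \<sigma> a k t)
      = hs_inner k (sig_level \<gamma> a k s) (sig_level \<sigma> a k t) * x ^ k" for k
    unfolding hs_inner_def sig_level_def sum_distrib_right
    by (intro sum.cong refl) (auto simp: sig_coord_scaleR[OF assms] words_def mult_ac)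
  then show ?thesis unfolding sig_kernel_def by simp
qed

section \<open>Power series with coefficients of order \<open>1 / (k!)\<^sup>2\<close>\<close>

lemma summable_coeff_fact_sq:
  fixes c :: "nat \<Rightarrow> real"
  assumes cb: "\<And>k. \<bar>c k\<bar> \<le> A ^ k / fact k * (B ^ k / fact k)" and "A \<ge> 0" "B \<ge> 0"
  shows "summable (\<lambda>k. c k * y ^ k)"
proof (rule summable_comparison_test'[OF summable_exp[of "A * B * \<bar>y\<bar>"], of 0])
  fix n :: nat
  have "\<bar>c n * y ^ n\<bar> \<le> A ^ n / fact n * (B ^ n / fact n) * \<bar>y\<bar> ^ n"
    unfolding abs_mult power_abs by (intro mult_right_mono cb) auto
  also have "\<dots> = (A * B * \<bar>y\<bar>) ^ n / (fact n * fact n)" by (simp add: power_mult_distrib)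
  also have "\<dots> \<le> (A * B * \<bar>y\<bar>) ^ n / (fact n * 1)"
    using assms(2,3) by (intro divide_left_mono mult_left_mono) auto
  finally show "norm (c n * y ^ n) \<le> inverse (fact n) * (A * B * \<bar>y\<bar>) ^ n"
    by (simp add: field_simps)
qed

lemma diffs_funpow:
  fixes c :: "nat \<Rightarrow> real"
  shows "(diffs ^^ k) c l = fact (l + k) / fact l * c (l + k)"
proof (induction k arbitrary: l)
  case 0
  then show ?case by simp
next
  case (Suc k)
  have "(diffs ^^ Suc k) c l = of_nat (Suc l) * (diffs ^^ k) c (Suc l)"
    by (simp add: diffs_def)
  also have "\<dots> = of_nat (Suc l) * (fact (Suc l + k) / fact (Suc l) * c (Suc l + k))"
    using Suc by simp
  also have "\<dots> = fact (l + Suc k) / fact l * c (l + Suc k)"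
  proof -
    have "N \<noteq> 0 \<Longrightarrow> G \<noteq> 0 \<Longrightarrow> N * (X / (N * G) * C) = X / G * C" for N G X C :: real
      by (simp add: field_simps)
    then show ?thesis unfolding fact_Suc[of l] by simp
  qed
  finally show ?case .
qed

lemma deriv_funpow_power_series:
  fixes c :: "nat \<Rightarrow> real"
  assumes "\<And>y. summable (\<lambda>n. c n * y ^ n)"
  shows "(\<forall>y. summable (\<lambda>n. (diffs ^^ k) c n * y ^ n))
    \<and> (deriv ^^ k) (\<lambda>x. \<Sum>n. c n * x ^ n) = (\<lambda>x. \<Sum>n. (diffs ^^ k) c n * x ^ n)"
proof (induction k)
  case 0
  then show ?case using assms by simp
next
  case (Suc k)
  then have summable: "\<And>y. summable (\<lambda>n. (diffs ^^ k) c n * y ^ n)" by blast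
  have "deriv (\<lambda>x. \<Sum>n. (diffs ^^ k) c n * x ^ n) = (\<lambda>x. \<Sum>n. diffs ((diffs ^^ k) c) n * x ^ n)"
    using termdiffs_strong_converges_everywhere[OF summable] by (intro ext DERIV_imp_deriv)
  then show ?case using Suc termdiff_converges_all[OF summable] by simp
qed

lemma has_real_derivative_deriv_funpow_power_series:
  fixes c :: "nat \<Rightarrow> real"
  assumes "\<And>y. summable (\<lambda>n. c n * y ^ n)"
  shows "((deriv ^^ k) (\<lambda>x. \<Sum>n. c n * x ^ n)
    has_real_derivative (deriv ^^ Suc k) (\<lambda>x. \<Sum>n. c n * x ^ n) x) (at x)"
  using termdiffs_strong_converges_everywhere[of "(diffs ^^ k) c"]
    deriv_funpow_power_series[OF assms, of k] deriv_funpow_power_series[OF assms, of "Suc k"]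
  by simp

lemma sums_deriv_funpow_power_series:
  fixes c :: "nat \<Rightarrow> real"
  assumes "\<And>y. summable (\<lambda>n. c n * y ^ n)"
  shows "(\<lambda>l. x ^ l * (fact (l + k) / fact l) * c (l + k)) sums (deriv ^^ k) (\<lambda>x. \<Sum>n. c n * x ^ n) x"
  using deriv_funpow_power_series[OF assms, of k] summable_sums[of "\<lambda>l. (diffs ^^ k) c l * x ^ l"]
  by (simp add: diffs_funpow mult_ac)

lemma summable_bessel_series:
  fixes y :: real
  assumes "y \<ge> 0"
  shows "summable (\<lambda>m. y ^ m / (fact m * fact (m + k)))"
proof (rule summable_comparison_test'[OF summable_exp[of y], of 0])
  fix m :: nat
  have "y ^ m / (fact m * fact (m + k)) \<le> y ^ m / (fact m * 1)"
    using assms by (intro divide_left_mono mult_left_mono) auto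
  then show "norm (y ^ m / (fact m * fact (m + k))) \<le> inverse (fact m) * y ^ m"
    using assms by (simp add: field_simps)
qed

lemma bessel_I_sqrt:
  assumes "y \<ge> 0"
  shows "bessel_I k (2 * sqrt y) = sqrt y ^ k * (\<Sum>m. y ^ m / (fact m * fact (m + k)))"
proof -
  have "(2 * sqrt y / 2) ^ (2 * m + k) / (fact m * fact (m + k))
      = sqrt y ^ k * (y ^ m / (fact m * fact (m + k)))" for m
  proof -
    have "sqrt y ^ (2 * m) = y ^ m" unfolding power_mult using assms by simp
    then show ?thesis by (simp add: power_add)
  qed
  then show ?thesis
    unfolding bessel_I_def using suminf_mult[OF summable_bessel_series[OF assms]] by simp
qed

lemma power_series_deriv_bessel_bound:
  fixes c :: "nat \<Rightarrow> real"
  assumes cb: "\<And>k. \<bar>c k\<bar> \<le> A ^ k / fact k * (B ^ k / fact k)" and A: "A \<ge> 0" and B: "B \<ge> 0"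
    and x: "x \<noteq> 0"
  shows "\<bar>\<Sum>l. x ^ l * (fact (l + k) / fact l) * c (l + k)\<bar>
    \<le> sqrt A ^ k * sqrt B ^ k / sqrt \<bar>x\<bar> ^ k * bessel_I k (2 * sqrt (\<bar>x\<bar> * A * B))"
proof -
  define y where "y = \<bar>x\<bar> * A * B"
  have y: "y \<ge> 0" unfolding y_def using A B by simp
  define e where "e = (\<lambda>m. y ^ m / (fact m * fact (m + k)))"
  have e: "summable e" unfolding e_def by (rule summable_bessel_series[OF y])
  have term_bound: "norm (x ^ l * (fact (l + k) / fact l) * c (l + k)) \<le> (A * B) ^ k * e l" for l
  proof -
    have "norm (x ^ l * (fact (l + k) / fact l) * c (l + k)) \<le>
        \<bar>x\<bar> ^ l * (fact (l + k) / fact l) * (A ^ (l + k) / fact (l + k) * (B ^ (l + k) / fact (l + k)))"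
      unfolding norm_mult real_norm_def abs_mult power_abs abs_divide abs_of_nonneg[OF fact_ge_zero]
      by (intro mult_left_mono cb) auto
    also have "\<dots> = (A * B) ^ k * e l"
    proof -
      have "(fact (l + k) :: real) > 0" by simp
      then show ?thesis unfolding e_def y_def by (simp add: field_simps power_mult_distrib power_add)
    qed
    finally show ?thesis .
  qed
  have "\<bar>\<Sum>l. x ^ l * (fact (l + k) / fact l) * c (l + k)\<bar> \<le> (\<Sum>l. (A * B) ^ k * e l)"
    using norm_suminf_le[OF term_bound summable_mult[OF e]] by (simp only: real_norm_def)
  also have "\<dots> = (A * B) ^ k * (\<Sum>m. y ^ m / (fact m * fact (m + k)))"
    by (subst suminf_mult[OF e]) (simp add: e_def)
  also have "(A * B) ^ k = sqrt A ^ k * sqrt B ^ k / sqrt \<bar>x\<bar> ^ k * sqrt y ^ k"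
  proof -
    have "sqrt y = sqrt \<bar>x\<bar> * sqrt (A * B)" unfolding y_def by (simp add: real_sqrt_mult)
    then have "sqrt A * sqrt B / sqrt \<bar>x\<bar> * sqrt y = sqrt (A * B) * sqrt (A * B)"
      using x by (simp add: real_sqrt_mult)
    also have "\<dots> = A * B" using A B by simp
    finally show ?thesis by (simp flip: power_mult_distrib power_divide)
  qed
  finally show ?thesis unfolding y_def[symmetric] bessel_I_sqrt[OF y] by (simp only: mult.assoc)
qed

theorem mainTheorem13:
  fixes \<gamma> \<sigma> :: "real \<Rightarrow> 'v::euclidean_space"
    and a b s t :: real
    and f :: "real \<Rightarrow> real"
  assumes "continuous_on {a..b} \<gamma>" and "bounded_variation_on \<gamma> a b"
    and "continuous_on {a..b} \<sigma>" and "bounded_variation_on \<sigma> a b"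
    and "s \<in> {a..b}" and "t \<in> {a..b}"
    and f_def: "f = (\<lambda>x. sig_kernel (\<lambda>u. x *\<^sub>R \<gamma> u) \<sigma> a s t)"
  shows "(\<forall>k x. ((deriv ^^ k) f has_real_derivative (deriv ^^ Suc k) f x) (at x))
       \<and> (\<forall>k x. (\<lambda>l. x ^ l * (fact (l + k) / fact l)
                      * hs_inner (l + k) (sig_level \<gamma> a (l + k) s) (sig_level \<sigma> a (l + k) t))
                 sums ((deriv ^^ k) f x))
       \<and> (\<forall>k x. x \<noteq> 0 \<longrightarrow>
            \<bar>(deriv ^^ k) f x\<bar>
              \<le> sqrt (path_length \<gamma> a s) ^ k * sqrt (path_length \<sigma> a t) ^ k / sqrt \<bar>x\<bar> ^ k
                 * bessel_I k (2 * sqrt (\<bar>x\<bar> * path_length \<gamma> a s * path_length \<sigma> a t)))"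
proof -
  define c where "c k = hs_inner k (sig_level \<gamma> a k s) (sig_level \<sigma> a k t)" for k
  have f_eq: "f = (\<lambda>x. \<Sum>k. c k * x ^ k)"
    unfolding f_def c_def using sig_kernel_scaleR[OF assms(1,2,5)] by simp
  have c: "\<bar>c k\<bar> \<le> path_length \<gamma> a s ^ k / fact k * (path_length \<sigma> a t ^ k / fact k)" for k
    unfolding c_def by (rule hs_inner_sig_level_le[OF assms(1-6)])
  have L: "path_length \<gamma> a s \<ge> 0" "path_length \<sigma> a t \<ge> 0"
    using path_length_nonneg assms(2,4,5,6) by blast+
  have summable: "\<And>y. summable (\<lambda>k. c k * y ^ k)" by (rule summable_coeff_fact_sq[OF c L])
  note sums = sums_deriv_funpow_power_series[OF summable, folded f_eq]
  have "(deriv ^^ k) f x = (\<Sum>l. x ^ l * (fact (l + k) / fact l) * c (l + k))" for k x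
    using sums[of x k] by (simp add: sums_iff)
  then show ?thesis
    using has_real_derivative_deriv_funpow_power_series[OF summable, folded f_eq] sums
      power_series_deriv_bessel_bound[OF c L]
    unfolding c_def by simp
qed

end
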